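(* For all integers $k_1,k_2,d_1,d_2\geq 1$ there exist graphs $G_1$ and $G_2$ such that, for $i\in\{1,2\}$, $G_i$ has maximum degree $\Delta_i:=k_id_i$ and degeneracy $d_i$, and $$\operatorname{degen}(G_1\boxtimes G_2)=d_1+d_2+\min\{d_1\Delta_2,\ d_2\Delta_1\}.$$
   Context: The degeneracy $\operatorname{degen}(G)$ of a graph $G$ is the minimum integer $d$ such that every subgraph of $G$ has minimum degree at most $d$. The strong product $G_1 \boxtimes G_2$ has vertex set $V(G_1)\times V(G_2)$, with distinct vertices $(a,v),(b,u)$ adjacent iff ($a=b$ or $ab\in E(G_1)$) and ($u=v$ or $uv\in E(G_2)$). *)

theory Defs
  imports Main
begin

definition simple_graph :: "'a set \<Rightarrow> ('a \<Rightarrow> 'a \<Rightarrow> bool) \<Rightarrow> bool" where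
  "simple_graph V E \<longleftrightarrow> finite V \<and>
     (\<forall>u v. E u v \<longrightarrow> u \<in> V \<and> v \<in> V \<and> u \<noteq> v \<and> E v u)"

definition degree :: "'a set \<Rightarrow> ('a \<Rightarrow> 'a \<Rightarrow> bool) \<Rightarrow> 'a \<Rightarrow> nat" where
  "degree V E v = card {u \<in> V. E v u}"

definition max_degree :: "'a set \<Rightarrow> ('a \<Rightarrow> 'a \<Rightarrow> bool) \<Rightarrow> nat" where
  "max_degree V E = (if V = {} then 0 else Max (degree V E ` V))"

definition subgraph :: "'a set \<Rightarrow> ('a \<Rightarrow> 'a \<Rightarrow> bool) \<Rightarrow> 'a set \<Rightarrow> ('a \<Rightarrow> 'a \<Rightarrow> bool) \<Rightarrow> bool" where
  "subgraph W F V E \<longleftrightarrow> W \<subseteq> V \<and> (\<forall>u v. F u v \<longrightarrow> E u v \<and> u \<in> W \<and> v \<in> W \<and> F v u)"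

definition degeneracy :: "'a set \<Rightarrow> ('a \<Rightarrow> 'a \<Rightarrow> bool) \<Rightarrow> nat" where
  "degeneracy V E = (LEAST d. \<forall>W F. subgraph W F V E \<and> W \<noteq> {} \<longrightarrow>
                                   (\<exists>v\<in>W. degree W F v \<le> d))"

definition strong_product_edge ::
  "('a \<Rightarrow> 'a \<Rightarrow> bool) \<Rightarrow> ('b \<Rightarrow> 'b \<Rightarrow> bool) \<Rightarrow> 'a \<times> 'b \<Rightarrow> 'a \<times> 'b \<Rightarrow> bool" where
  "strong_product_edge E1 E2 x y \<longleftrightarrow> x \<noteq> y \<and>
     (fst x = fst y \<or> E1 (fst x) (fst y)) \<and> (snd x = snd y \<or> E2 (snd x) (snd y))"

end

theory Submission
  imports Defs
begin

text \<open>Call \<open>A \<subseteq> V\<close> a core of \<open>G\<close> if it is a vertex cover in which every vertex of \<open>G\<close> has exactly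
  \<open>d\<close> neighbours and whose vertices attain the maximum degree \<open>\<Delta>\<close>. Every nonempty vertex set
  contains a vertex whose neighbours in it all lie in the core (one outside the core, if
  possible), so \<open>degen G = d\<close>. In \<open>G\<^sub>1 \<boxtimes> G\<^sub>2\<close>, choosing such a vertex first in the
  projection to \<open>G\<^sub>1\<close> and then in the fibre over it gives a vertex of degree at most
  \<open>d\<^sub>2 + d\<^sub>1(\<Delta>\<^sub>2 + 1)\<close>, and symmetrically \<open>d\<^sub>1 + d\<^sub>2(\<Delta>\<^sub>1 + 1)\<close>. Conversely, on
  \<open>A\<^sub>1 \<times> V\<^sub>2 \<union> V\<^sub>1 \<times> A\<^sub>2\<close> every vertex has one of these two numbers as a lower bound on
  its degree. A clique \<open>K\<^bsub>d+1\<^esub>\<close> with \<open>k - 1\<close> suitably attached copies of its vertex set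
  realises a core with \<open>\<Delta> = kd\<close>.\<close>

definition induced :: "('a \<Rightarrow> 'a \<Rightarrow> bool) \<Rightarrow> 'a set \<Rightarrow> 'a \<Rightarrow> 'a \<Rightarrow> bool" where
  "induced E W u v \<longleftrightarrow> E u v \<and> u \<in> W \<and> v \<in> W"

lemma subgraph_induced:
  assumes "\<And>u v. E u v \<Longrightarrow> E v u" "W \<subseteq> V"
  shows "subgraph W (induced E W) V E"
  using assms unfolding subgraph_def induced_def by blast

lemma degeneracy_eqI:
  assumes low: "\<And>W F. subgraph W F V E \<Longrightarrow> W \<noteq> {} \<Longrightarrow> \<exists>v\<in>W. degree W F v \<le> d"
    and witness: "subgraph W F V E" "W \<noteq> {}" "\<And>v. v \<in> W \<Longrightarrow> d \<le> degree W F v"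
  shows "degeneracy V E = d"
  unfolding degeneracy_def
proof (rule Least_equality)
  fix d' assume "\<forall>W F. subgraph W F V E \<and> W \<noteq> {} \<longrightarrow> (\<exists>v\<in>W. degree W F v \<le> d')"
  with witness obtain v where "v \<in> W" "degree W F v \<le> d'" by blast
  with witness(3) show "d \<le> d'" by fastforce
qed (use low in blast)

lemma strong_product_edge_sym:
  assumes "\<And>u v. E1 u v \<Longrightarrow> E1 v u" "\<And>u v. E2 u v \<Longrightarrow> E2 v u"
    and "strong_product_edge E1 E2 p q"
  shows "strong_product_edge E1 E2 q p"
  using assms unfolding strong_product_edge_def by auto

lemma strong_product_edge_swap:
  "strong_product_edge E2 E1 (prod.swap p) (prod.swap q) = strong_product_edge E1 E2 p q"
  unfolding strong_product_edge_def by (auto simp: prod_eq_iff)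

lemma subgraph_strong_product_swap:
  assumes "subgraph W F (V1 \<times> V2) (strong_product_edge E1 E2)"
  shows "subgraph (prod.swap -` W) (\<lambda>p q. F (prod.swap p) (prod.swap q)) (V2 \<times> V1)
           (strong_product_edge E2 E1)"
  using assms unfolding subgraph_def
  by (auto simp: strong_product_edge_swap[of E2 E1 "prod.swap _" "prod.swap _", simplified])

lemma degree_swap:
  "degree (prod.swap -` W) (\<lambda>p q. F (prod.swap p) (prod.swap q)) (prod.swap p) = degree W F p"
proof -
  have "{q \<in> prod.swap -` W. F p (prod.swap q)} = prod.swap ` {q \<in> W. F p q}"
    by (force simp: image_iff)
  then show ?thesis unfolding degree_def by (simp add: card_image)
qed

lemma degree_induced_strong_product_swap:
  "degree (prod.swap -` W) (induced (strong_product_edge E2 E1) (prod.swap -` W)) (prod.swap p)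
     = degree W (induced (strong_product_edge E1 E2) W) p"
proof -
  have "induced (strong_product_edge E2 E1) (prod.swap -` W)
      = (\<lambda>p q. induced (strong_product_edge E1 E2) W (prod.swap p) (prod.swap q))"
    by (simp add: fun_eq_iff induced_def strong_product_edge_swap[of E1 E2])
  then show ?thesis by (simp add: degree_swap)
qed

locale core_graph =
  fixes V :: "'a set" and E :: "'a \<Rightarrow> 'a \<Rightarrow> bool" and A :: "'a set" and d \<Delta> :: nat
  assumes simple: "simple_graph V E"
    and core_subset: "A \<subseteq> V" and core_nonempty: "A \<noteq> {}"
    and core_cover: "E u v \<Longrightarrow> u \<in> A \<or> v \<in> A"
    and card_core_neighbours: "v \<in> V \<Longrightarrow> card {u \<in> A. E v u} = d"
    and degree_le: "v \<in> V \<Longrightarrow> degree V E v \<le> \<Delta>"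
    and core_degree: "a \<in> A \<Longrightarrow> degree V E a = \<Delta>"
begin

lemma finite_vertices: "finite V"
  using simple unfolding simple_graph_def by blast

lemma finite_core: "finite A"
  using finite_vertices core_subset by (rule finite_subset[rotated])

lemma edge_sym: "E u v \<Longrightarrow> E v u"
  using simple unfolding simple_graph_def by blast

lemma edge_irrefl: "\<not> E v v"
  using simple unfolding simple_graph_def by blast

lemma edge_vertices: "E u v \<Longrightarrow> u \<in> V \<and> v \<in> V"
  using simple unfolding simple_graph_def by blast

lemma max_degree_eq: "max_degree V E = \<Delta>"
proof -
  obtain a where "a \<in> A" using core_nonempty by blast
  then have "\<Delta> \<in> degree V E ` V" using core_subset core_degree by force
  then show ?thesis
    unfolding max_degree_def using finite_vertices degree_le by (auto intro: Max_eqI)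
qed

lemma obtain_vertex_core_neighbours:
  assumes "S \<noteq> {}"
  obtains v where "v \<in> S" "\<And>u. u \<in> S \<Longrightarrow> E v u \<Longrightarrow> u \<in> A"
proof (cases "S \<subseteq> A")
  case True
  with assms that show ?thesis by blast
next
  case False
  then obtain v where "v \<in> S" "v \<notin> A" by blast
  with that core_cover show ?thesis by blast
qed

lemma degeneracy_eq: "degeneracy V E = d"
proof (rule degeneracy_eqI)
  fix W F assume sub: "subgraph W F V E" and "W \<noteq> {}"
  then obtain v where v: "v \<in> W" and core: "\<And>u. u \<in> W \<Longrightarrow> E v u \<Longrightarrow> u \<in> A"
    using obtain_vertex_core_neighbours by blast
  have "{u \<in> W. F v u} \<subseteq> {u \<in> A. E v u}"
    using sub core unfolding subgraph_def by blast
  moreover have "finite {u \<in> A. E v u}"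
    using finite_core by simp
  moreover have "v \<in> V"
    using sub v unfolding subgraph_def by blast
  ultimately have "degree W F v \<le> d"
    unfolding degree_def using card_core_neighbours by (metis card_mono)
  with v show "\<exists>v\<in>W. degree W F v \<le> d" by blast
next
  show "subgraph A (induced E A) V E"
    using edge_sym core_subset by (rule subgraph_induced)
  show "A \<noteq> {}" by (rule core_nonempty)
  fix a assume "a \<in> A"
  then have "degree A (induced E A) a = card {u \<in> A. E a u}"
    unfolding degree_def induced_def by meson
  with \<open>a \<in> A\<close> show "d \<le> degree A (induced E A) a"
    using card_core_neighbours core_subset by auto
qed

end

lemma strong_product_low_degree_vertex:
  assumes "core_graph V1 E1 A1 d1 \<Delta>1" "core_graph V2 E2 A2 d2 \<Delta>2"
    and sub: "subgraph W F (V1 \<times> V2) (strong_product_edge E1 E2)" and "W \<noteq> {}"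
  shows "\<exists>p\<in>W. degree W F p \<le> d2 + d1 * (\<Delta>2 + 1)"
proof -
  interpret G1: core_graph V1 E1 A1 d1 \<Delta>1 by fact
  interpret G2: core_graph V2 E2 A2 d2 \<Delta>2 by fact
  have "fst ` W \<noteq> {}"
    using \<open>W \<noteq> {}\<close> by blast
  then obtain v where v: "v \<in> fst ` W" and core1: "\<And>x. x \<in> fst ` W \<Longrightarrow> E1 v x \<Longrightarrow> x \<in> A1"
    by (rule G1.obtain_vertex_core_neighbours) blast
  have "{y. (v, y) \<in> W} \<noteq> {}"
    using v by force
  then obtain w where w: "(v, w) \<in> W" and core2: "\<And>y. (v, y) \<in> W \<Longrightarrow> E2 w y \<Longrightarrow> y \<in> A2"
    by (rule G2.obtain_vertex_core_neighbours) auto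
  have "w \<in> V2"
    using sub w unfolding subgraph_def by blast
  let ?N1 = "{x \<in> A1. E1 v x}" and ?N2 = "{y \<in> A2. E2 w y}"
    and ?M2 = "insert w {y \<in> V2. E2 w y}"
  have "{q \<in> W. F (v, w) q} \<subseteq> {v} \<times> ?N2 \<union> ?N1 \<times> ?M2"
  proof
    fix q assume "q \<in> {q \<in> W. F (v, w) q}"
    moreover obtain x y where q: "q = (x, y)" by (cases q)
    ultimately have "(x, y) \<in> W" "F (v, w) (x, y)" by auto
    then have xy: "x \<in> fst ` W" "strong_product_edge E1 E2 (v, w) (x, y)"
      using sub unfolding subgraph_def by force+
    show "q \<in> {v} \<times> ?N2 \<union> ?N1 \<times> ?M2"
    proof (cases "x = v")
      case True
      with xy have "E2 w y"
        unfolding strong_product_edge_def by auto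
      with True \<open>(x, y) \<in> W\<close> show ?thesis
        using core2 q by blast
    next
      case False
      with xy have "E1 v x" "y = w \<or> E2 w y"
        unfolding strong_product_edge_def by auto
      then show ?thesis
        using core1 xy(1) G2.edge_vertices q by blast
    qed
  qed
  then have "degree W F (v, w) \<le> card ({v} \<times> ?N2 \<union> ?N1 \<times> ?M2)"
    unfolding degree_def using G1.finite_core G2.finite_core G2.finite_vertices
    by (intro card_mono) auto
  also have "\<dots> \<le> card ?N2 + card ?N1 * card ?M2"
    using card_Un_le[of "{v} \<times> ?N2" "?N1 \<times> ?M2"] by (simp add: card_cartesian_product)
  also have "\<dots> \<le> d2 + d1 * (\<Delta>2 + 1)"
  proof -
    have "(v, w) \<in> V1 \<times> V2"
      using sub w unfolding subgraph_def by blast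
    then have "card ?N1 = d1" "card ?N2 = d2" "degree V2 E2 w \<le> \<Delta>2"
      by (simp_all add: G1.card_core_neighbours G2.card_core_neighbours G2.degree_le)
    moreover have "card ?M2 \<le> degree V2 E2 w + 1"
      unfolding degree_def by (simp add: card_insert_if G2.finite_vertices)
    ultimately have "card ?M2 \<le> \<Delta>2 + 1" "card ?N1 = d1" "card ?N2 = d2"
      by linarith+
    then show ?thesis
      using mult_le_mono2[of "card ?M2" "\<Delta>2 + 1" d1] by simp
  qed
  finally show ?thesis using w by blast
qed

lemma strong_product_core_degree:
  assumes "core_graph V1 E1 A1 d1 \<Delta>1" "core_graph V2 E2 A2 d2 \<Delta>2"
    and W: "W = A1 \<times> V2 \<union> V1 \<times> A2" and "(x, y) \<in> W" "y \<in> A2"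
  shows "d2 + d1 * (\<Delta>2 + 1) \<le> degree W (induced (strong_product_edge E1 E2) W) (x, y)"
proof -
  interpret G1: core_graph V1 E1 A1 d1 \<Delta>1 by fact
  interpret G2: core_graph V2 E2 A2 d2 \<Delta>2 by fact
  have x: "x \<in> V1" and y: "y \<in> V2"
    using \<open>(x, y) \<in> W\<close> W G1.core_subset G2.core_subset by auto
  let ?N1 = "{x' \<in> A1. E1 x x'}" and ?N2 = "{y' \<in> A2. E2 y y'}"
    and ?M2 = "insert y {y' \<in> V2. E2 y y'}"
  have "?N1 \<times> ?M2 \<union> {x} \<times> ?N2 \<subseteq> {q \<in> W. induced (strong_product_edge E1 E2) W (x, y) q}"
    using \<open>(x, y) \<in> W\<close> W x y G1.edge_irrefl G2.edge_irrefl
    unfolding induced_def strong_product_edge_def by auto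
  moreover have "finite W"
    using W G1.finite_vertices G2.finite_vertices G1.finite_core G2.finite_core by simp
  ultimately have "card (?N1 \<times> ?M2 \<union> {x} \<times> ?N2)
      \<le> degree W (induced (strong_product_edge E1 E2) W) (x, y)"
    unfolding degree_def by (intro card_mono) auto
  moreover have "card (?N1 \<times> ?M2 \<union> {x} \<times> ?N2) = card ?N1 * card ?M2 + card ?N2"
    using G1.finite_core G2.finite_core G2.finite_vertices G1.edge_irrefl
    by (subst card_Un_disjoint) (auto simp: card_cartesian_product)
  moreover have "card ?M2 = \<Delta>2 + 1"
    using G2.core_degree[OF \<open>y \<in> A2\<close>] G2.finite_vertices G2.edge_irrefl
    unfolding degree_def by simp
  ultimately show ?thesis
    using G1.card_core_neighbours[OF x] G2.card_core_neighbours[OF y] by simp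
qed

theorem degeneracy_strong_product_core_graphs:
  assumes G1: "core_graph V1 E1 A1 d1 \<Delta>1" and G2: "core_graph V2 E2 A2 d2 \<Delta>2"
  shows "degeneracy (V1 \<times> V2) (strong_product_edge E1 E2) = d1 + d2 + min (d1 * \<Delta>2) (d2 * \<Delta>1)"
proof -
  interpret G1: core_graph V1 E1 A1 d1 \<Delta>1 by fact
  interpret G2: core_graph V2 E2 A2 d2 \<Delta>2 by fact
  let ?E = "strong_product_edge E1 E2" and ?W = "A1 \<times> V2 \<union> V1 \<times> A2"
  have "d1 + d2 + min (d1 * \<Delta>2) (d2 * \<Delta>1) = min (d2 + d1 * (\<Delta>2 + 1)) (d1 + d2 * (\<Delta>1 + 1))"
    by (simp add: min_def)
  also have "\<dots> = degeneracy (V1 \<times> V2) ?E"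
  proof (rule sym, rule degeneracy_eqI)
    fix W F assume sub: "subgraph W F (V1 \<times> V2) ?E" and "W \<noteq> {}"
    obtain p where p: "p \<in> W" "degree W F p \<le> d2 + d1 * (\<Delta>2 + 1)"
      using strong_product_low_degree_vertex[OF G1 G2 sub \<open>W \<noteq> {}\<close>] by blast
    have "prod.swap -` W \<noteq> {}"
      using \<open>W \<noteq> {}\<close> by (metis ex_in_conv swap_swap vimage_eq)
    then obtain q where "q \<in> prod.swap -` W"
      "degree (prod.swap -` W) (\<lambda>p q. F (prod.swap p) (prod.swap q)) q \<le> d1 + d2 * (\<Delta>1 + 1)"
      using strong_product_low_degree_vertex[OF G2 G1 subgraph_strong_product_swap[OF sub]] by blast
    then have q: "prod.swap q \<in> W" "degree W F (prod.swap q) \<le> d1 + d2 * (\<Delta>1 + 1)"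
      using degree_swap[of W F "prod.swap q"] by simp_all
    show "\<exists>p\<in>W. degree W F p \<le> min (d2 + d1 * (\<Delta>2 + 1)) (d1 + d2 * (\<Delta>1 + 1))"
      using p q by (cases "d2 + d1 * (\<Delta>2 + 1) \<le> d1 + d2 * (\<Delta>1 + 1)") (auto simp: min_def)
  next
    show "subgraph ?W (induced ?E ?W) (V1 \<times> V2) ?E"
    proof (rule subgraph_induced)
      show "\<And>p q. ?E p q \<Longrightarrow> ?E q p"
        by (rule strong_product_edge_sym[OF G1.edge_sym G2.edge_sym])
      show "?W \<subseteq> V1 \<times> V2"
        using G1.core_subset G2.core_subset by auto
    qed
    show "?W \<noteq> {}"
      using G1.core_nonempty G2.core_subset G2.core_nonempty by auto
  next
    fix p assume "p \<in> ?W"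
    then obtain x y where p: "p = (x, y)" "(x, y) \<in> ?W" by auto
    show "min (d2 + d1 * (\<Delta>2 + 1)) (d1 + d2 * (\<Delta>1 + 1)) \<le> degree ?W (induced ?E ?W) p"
    proof (cases "y \<in> A2")
      case True
      then show ?thesis
        using strong_product_core_degree[OF G1 G2 refl p(2)] p(1) by simp
    next
      case False
      have swapped: "prod.swap -` ?W = A2 \<times> V1 \<union> V2 \<times> A1"
        by auto
      from False p have "(y, x) \<in> prod.swap -` ?W" "x \<in> A1"
        by auto
      then have "d1 + d2 * (\<Delta>1 + 1)
          \<le> degree (prod.swap -` ?W) (induced (strong_product_edge E2 E1) (prod.swap -` ?W)) (y, x)"
        by (rule strong_product_core_degree[OF G2 G1 swapped])
      then show ?thesis
        using degree_induced_strong_product_swap[of ?W E2 E1 p] p(1) by simp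
    qed
  qed
  finally show ?thesis by (rule sym)
qed

lemma card_residue_class:
  fixes a m k :: nat
  assumes "a < m"
  shows "card {u \<in> {..<m * k}. u mod m = a} = k"
proof -
  have "{u \<in> {..<m * k}. u mod m = a} = (\<lambda>j. j * m + a) ` {..<k}"
  proof (intro set_eqI iffI)
    fix u assume "u \<in> {u \<in> {..<m * k}. u mod m = a}"
    then have "u = u div m * m + a" "u div m < k"
      using div_mult_mod_eq[of u m] less_mult_imp_div_less[of u k m] by (simp_all add: mult.commute)
    then show "u \<in> (\<lambda>j. j * m + a) ` {..<k}" by blast
  next
    fix u assume "u \<in> (\<lambda>j. j * m + a) ` {..<k}"
    then obtain j where "j < k" "u = j * m + a" by blast
    moreover have "j * m + a < Suc j * m" using assms by simp
    moreover have "Suc j * m \<le> m * k"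
      using mult_le_mono1[of "Suc j" k m] \<open>j < k\<close> by (simp add: mult.commute)
    ultimately show "u \<in> {u \<in> {..<m * k}. u mod m = a}"
      using assms by auto
  qed
  moreover have "inj_on (\<lambda>j. j * m + a) {..<k}"
    using assms by (intro inj_onI) simp
  ultimately show ?thesis by (simp add: card_image)
qed

definition residue_vertices :: "nat \<Rightarrow> nat \<Rightarrow> nat set" where
  "residue_vertices d k = {..<Suc d * k}"

text \<open>The clique on the core \<open>{0..d}\<close>, together with the vertices \<open>u < (d+1)k\<close> outside it,
  each joined to the core vertices not congruent to \<open>u\<close> modulo \<open>d+1\<close>.\<close>
definition residue_edge :: "nat \<Rightarrow> nat \<Rightarrow> nat \<Rightarrow> nat \<Rightarrow> bool" where
  "residue_edge d k u v \<longleftrightarrow> u < Suc d * k \<and> v < Suc d * k \<and> (u < Suc d \<or> v < Suc d)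
     \<and> u mod Suc d \<noteq> v mod Suc d"

lemma core_graph_residue:
  assumes "k \<ge> 1"
  shows "core_graph (residue_vertices d k) (residue_edge d k) {..<Suc d} d (k * d)"
proof -
  have core: "Suc d \<le> Suc d * k"
    using assms by (metis mult_le_mono2 mult_1_right)
  have core_neighbours: "{u \<in> {..<Suc d}. residue_edge d k v u} = {..<Suc d} - {v mod Suc d}"
    if "v < Suc d * k" for v
    using that core unfolding residue_edge_def by auto
  have core_degree: "degree (residue_vertices d k) (residue_edge d k) a = k * d" if "a < Suc d" for a
  proof -
    have "{u \<in> residue_vertices d k. residue_edge d k a u}
        = {..<Suc d * k} - {u \<in> {..<Suc d * k}. u mod Suc d = a}"
      using that core unfolding residue_vertices_def residue_edge_def by auto
    also have "card \<dots> = Suc d * k - k"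
      using card_residue_class[OF that, of k] by (subst card_Diff_subset) auto
    finally show ?thesis
      unfolding degree_def by simp
  qed
  show ?thesis
  proof
    show "simple_graph (residue_vertices d k) (residue_edge d k)"
      unfolding simple_graph_def residue_vertices_def residue_edge_def by auto
    show "{..<Suc d} \<subseteq> residue_vertices d k"
      using core unfolding residue_vertices_def by auto
    show "card {u \<in> {..<Suc d}. residue_edge d k v u} = d" if "v \<in> residue_vertices d k" for v
      using core_neighbours that unfolding residue_vertices_def by simp
    show "degree (residue_vertices d k) (residue_edge d k) a = k * d" if "a \<in> {..<Suc d}" for a
      using core_degree that by simp
    show "degree (residue_vertices d k) (residue_edge d k) v \<le> k * d"
      if "v \<in> residue_vertices d k" for v
    proof (cases "v < Suc d")
      case False
      then have "{u \<in> residue_vertices d k. residue_edge d k v u} = {u \<in> {..<Suc d}. residue_edge d k v u}"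
        unfolding residue_vertices_def residue_edge_def by auto
      then show ?thesis
        using core_neighbours that assms unfolding degree_def residue_vertices_def by simp
    qed (simp add: core_degree)
  qed (auto simp: residue_edge_def)
qed

theorem mainTheorem8:
  fixes k1 k2 d1 d2 :: nat
  assumes "k1 \<ge> 1" "k2 \<ge> 1" "d1 \<ge> 1" "d2 \<ge> 1"
  shows "\<exists>(V1 :: nat set) E1 (V2 :: nat set) E2.
           simple_graph V1 E1 \<and> simple_graph V2 E2 \<and>
           max_degree V1 E1 = k1 * d1 \<and> degeneracy V1 E1 = d1 \<and>
           max_degree V2 E2 = k2 * d2 \<and> degeneracy V2 E2 = d2 \<and>
           degeneracy (V1 \<times> V2) (strong_product_edge E1 E2)
             = d1 + d2 + min (d1 * (k2 * d2)) (d2 * (k1 * d1))"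
proof -
  have G1: "core_graph (residue_vertices d1 k1) (residue_edge d1 k1) {..<Suc d1} d1 (k1 * d1)"
    using \<open>k1 \<ge> 1\<close> by (rule core_graph_residue)
  have G2: "core_graph (residue_vertices d2 k2) (residue_edge d2 k2) {..<Suc d2} d2 (k2 * d2)"
    using \<open>k2 \<ge> 1\<close> by (rule core_graph_residue)
  show ?thesis
    using core_graph.simple[OF G1] core_graph.simple[OF G2]
      core_graph.max_degree_eq[OF G1] core_graph.max_degree_eq[OF G2]
      core_graph.degeneracy_eq[OF G1] core_graph.degeneracy_eq[OF G2]
      degeneracy_strong_product_core_graphs[OF G1 G2]
    by blast
qed

end
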